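(* Let $\mathbb{Q}_0,\mathbb{Q}_1$ be posets, $D_0$ a non-principal ultrafilter on $\omega$, and $Q_0\subseteq\mathbb{Q}_0$, $Q_1\subseteq\mathbb{Q}_1$ be $D_0$-linked subsets. Then $Q_0\times Q_1$ is $D_0$-linked in $\mathbb{Q}_0\times\mathbb{Q}_1$. In particular: (a) for any infinite cardinal $\mu$, the product of two $\mu$-$D_0$-linked posets is $\mu$-$D_0$-linked; (b) if $\theta$ is regular, the product of two $\theta$-$D_0$-Knaster posets is $\theta$-$D_0$-Knaster. The analogous statements hold with "uf-linked" in place of "$D_0$-linked" and "uf-Knaster" in place of "$D_0$-Knaster".
   Context: For a poset $\mathbb{P}$ and $\bar p=\langle p_n:n<\omega\rangle$ in $\mathbb{P}$, $\dot W(\bar p)$ names $\{n:p_n\in\dot G\}$. For a filter $F$ on $\omega$ containing the cofinite sets, $F^+$ is the family of subsets of $\omega$ meeting every member of $F$. $Q\subseteq\mathbb{P}$ is $F$-linked if for every sequence $\bar p$ in $Q$ there is $q\in\mathbb{P}$ forcing $\dot W(\bar p)\in F^+$; $Q$ is uf-linked if it is $D$-linked for every non-principal ultrafilter $D$ on $\omega$. $\mathbb{P}$ is $\mu$-$F$-linked ($\mu$-uf-linked) if it is the union of $\mu$ many $F$-linked (uf-linked) subsets; $\mathbb{P}$ is $\theta$-$F$-Knaster ($\theta$-uf-Knaster) if every subset of size $\theta$ contains an $F$-linked (uf-linked) subset of size $\theta$. *)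

theory Defs
  imports Main
begin

definition poset :: "'a set \<Rightarrow> ('a \<Rightarrow> 'a \<Rightarrow> bool) \<Rightarrow> bool" where
  "poset P le \<longleftrightarrow> (\<forall>p\<in>P. le p p)
     \<and> (\<forall>p\<in>P. \<forall>q\<in>P. le p q \<and> le q p \<longrightarrow> p = q)
     \<and> (\<forall>p\<in>P. \<forall>q\<in>P. \<forall>r\<in>P. le p q \<and> le q r \<longrightarrow> le p r)"

definition prod_le :: "('a \<Rightarrow> 'a \<Rightarrow> bool) \<Rightarrow> ('b \<Rightarrow> 'b \<Rightarrow> bool)
    \<Rightarrow> 'a \<times> 'b \<Rightarrow> 'a \<times> 'b \<Rightarrow> bool" where
  "prod_le le0 le1 x y \<longleftrightarrow> le0 (fst x) (fst y) \<and> le1 (snd x) (snd y)"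

definition compat :: "'a set \<Rightarrow> ('a \<Rightarrow> 'a \<Rightarrow> bool) \<Rightarrow> 'a \<Rightarrow> 'a \<Rightarrow> bool" where
  "compat P le p q \<longleftrightarrow> (\<exists>r\<in>P. le r p \<and> le r q)"

definition filter_on_nat :: "nat set set \<Rightarrow> bool" where
  "filter_on_nat F \<longleftrightarrow> UNIV \<in> F \<and> {} \<notin> F
     \<and> (\<forall>A\<in>F. \<forall>B\<in>F. A \<inter> B \<in> F)
     \<and> (\<forall>A B. A \<in> F \<and> A \<subseteq> B \<longrightarrow> B \<in> F)"

definition nonprincipal_ultrafilter :: "nat set set \<Rightarrow> bool" where
  "nonprincipal_ultrafilter D \<longleftrightarrow> filter_on_nat D
     \<and> (\<forall>A. A \<in> D \<or> - A \<in> D)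
     \<and> (\<forall>A. finite A \<longrightarrow> A \<notin> D)"

definition Fplus :: "nat set set \<Rightarrow> nat set set" where
  "Fplus F = {X. \<forall>A\<in>F. X \<inter> A \<noteq> {}}"

text \<open>\<open>forces_W_in_Fplus P le F pbar q\<close>: the condition q forces that
  W(pbar) = {n. pbar n \<in> G} belongs to F^+ (F a ground-model filter).
  This is the standard unfolding of the forcing relation: for every
  A \<in> F, the set of conditions below some p_n with n \<in> A is dense below q,
  i.e. every r \<le> q is compatible with p_n for some n \<in> A.\<close>
definition forces_W_in_Fplus ::
    "'a set \<Rightarrow> ('a \<Rightarrow> 'a \<Rightarrow> bool) \<Rightarrow> nat set set \<Rightarrow> (nat \<Rightarrow> 'a) \<Rightarrow> 'a \<Rightarrow> bool" where
  "forces_W_in_Fplus P le F pbar q \<longleftrightarrow>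
     (\<forall>r\<in>P. le r q \<longrightarrow> (\<forall>A\<in>F. \<exists>n\<in>A. compat P le r (pbar n)))"

definition F_linked :: "'a set \<Rightarrow> ('a \<Rightarrow> 'a \<Rightarrow> bool) \<Rightarrow> nat set set \<Rightarrow> 'a set \<Rightarrow> bool" where
  "F_linked P le F Q \<longleftrightarrow> Q \<subseteq> P \<and>
     (\<forall>pbar. (\<forall>n. pbar n \<in> Q) \<longrightarrow> (\<exists>q\<in>P. forces_W_in_Fplus P le F pbar q))"

definition uf_linked :: "'a set \<Rightarrow> ('a \<Rightarrow> 'a \<Rightarrow> bool) \<Rightarrow> 'a set \<Rightarrow> bool" where
  "uf_linked P le Q \<longleftrightarrow> (\<forall>D. nonprincipal_ultrafilter D \<longrightarrow> F_linked P le D Q)"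

text \<open>mu-F-linked: P is the union of mu many F-linked subsets, where mu is
  given as the cardinality of an index set K.\<close>
definition mu_F_linked :: "'k set \<Rightarrow> 'a set \<Rightarrow> ('a \<Rightarrow> 'a \<Rightarrow> bool) \<Rightarrow> nat set set \<Rightarrow> bool" where
  "mu_F_linked K P le F \<longleftrightarrow> (\<exists>Q. (\<forall>i\<in>K. F_linked P le F (Q i)) \<and> P = (\<Union>i\<in>K. Q i))"

definition mu_uf_linked :: "'k set \<Rightarrow> 'a set \<Rightarrow> ('a \<Rightarrow> 'a \<Rightarrow> bool) \<Rightarrow> bool" where
  "mu_uf_linked K P le \<longleftrightarrow> (\<exists>Q. (\<forall>i\<in>K. uf_linked P le (Q i)) \<and> P = (\<Union>i\<in>K. Q i))"

text \<open>theta-F-Knaster, theta a cardinal (well-order relation, BNF cardinals).\<close>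
definition theta_F_Knaster :: "'c rel \<Rightarrow> 'a set \<Rightarrow> ('a \<Rightarrow> 'a \<Rightarrow> bool) \<Rightarrow> nat set set \<Rightarrow> bool" where
  "theta_F_Knaster \<theta> P le F \<longleftrightarrow> (\<forall>X. X \<subseteq> P \<and> (card_of X, \<theta>) \<in> ordIso \<longrightarrow>
     (\<exists>Y. Y \<subseteq> X \<and> (card_of Y, \<theta>) \<in> ordIso \<and> F_linked P le F Y))"

definition theta_uf_Knaster :: "'c rel \<Rightarrow> 'a set \<Rightarrow> ('a \<Rightarrow> 'a \<Rightarrow> bool) \<Rightarrow> bool" where
  "theta_uf_Knaster \<theta> P le \<longleftrightarrow> (\<forall>X. X \<subseteq> P \<and> (card_of X, \<theta>) \<in> ordIso \<longrightarrow>
     (\<exists>Y. Y \<subseteq> X \<and> (card_of Y, \<theta>) \<in> ordIso \<and> uf_linked P le Y))"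

end

theory Submission
  imports Defs
begin

text \<open>For an ultrafilter \<open>D\<close> we have \<open>D\<^sup>+ = D\<close>, so a condition forcing
  \<open>W(p\<^sub>n) \<in> D\<^sup>+\<close> makes the set of indices compatible with any stronger condition
  a member of \<open>D\<close>. Given such witnesses for the two coordinate sequences, the indices
  compatible with a pair \<open>(r\<^sub>0, r\<^sub>1)\<close> form the intersection of two members of \<open>D\<close>, hence
  again a member of \<open>D = D\<^sup>+\<close>. The cardinal versions follow by reindexing \<open>\<mu> \<times> \<mu>\<close> by \<open>\<mu>\<close>
  and, for Knaster, by thinning a set of size \<open>\<theta>\<close> twice: a function on a set of
  regular size \<open>\<theta>\<close> either has an image of size \<open>\<theta>\<close> or a fibre of size \<open>\<theta>\<close>, and
  singletons are always linked.\<close>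

unbundle cardinal_syntax

definition ultrafilter_on_nat :: "nat set set \<Rightarrow> bool" where
  "ultrafilter_on_nat D \<longleftrightarrow> filter_on_nat D \<and> (\<forall>A. A \<in> D \<or> - A \<in> D)"

lemma nonprincipal_ultrafilter_imp_ultrafilter:
  "nonprincipal_ultrafilter D \<Longrightarrow> ultrafilter_on_nat D"
  unfolding nonprincipal_ultrafilter_def ultrafilter_on_nat_def by blast

lemma Fplus_ultrafilter:
  assumes "ultrafilter_on_nat D"
  shows "Fplus D = D"
proof
  show "Fplus D \<subseteq> D"
  proof
    fix X assume "X \<in> Fplus D"
    moreover have "X \<inter> - X = {}" by blast
    ultimately show "X \<in> D"
      using assms unfolding ultrafilter_on_nat_def Fplus_def by blast
  qed
  show "D \<subseteq> Fplus D"
    using assms unfolding ultrafilter_on_nat_def filter_on_nat_def Fplus_def by blast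
qed

lemma forces_W_in_Fplus_iff:
  "forces_W_in_Fplus P le F pbar q \<longleftrightarrow>
     (\<forall>r\<in>P. le r q \<longrightarrow> {n. compat P le r (pbar n)} \<in> Fplus F)"
  unfolding forces_W_in_Fplus_def Fplus_def by blast

lemma compat_prod_le_iff:
  "compat (P0 \<times> P1) (prod_le le0 le1) p q \<longleftrightarrow>
     compat P0 le0 (fst p) (fst q) \<and> compat P1 le1 (snd p) (snd q)"
  unfolding compat_def prod_le_def by auto

lemma F_linked_Times:
  assumes D: "ultrafilter_on_nat D"
    and L0: "F_linked P0 le0 D Q0" and L1: "F_linked P1 le1 D Q1"
  shows "F_linked (P0 \<times> P1) (prod_le le0 le1) D (Q0 \<times> Q1)"
  unfolding F_linked_def
proof (intro conjI allI impI)
  show "Q0 \<times> Q1 \<subseteq> P0 \<times> P1" using L0 L1 unfolding F_linked_def by blast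
  fix pbar :: "nat \<Rightarrow> 'a \<times> 'b"
  assume "\<forall>n. pbar n \<in> Q0 \<times> Q1"
  then have "\<forall>n. (fst \<circ> pbar) n \<in> Q0" and "\<forall>n. (snd \<circ> pbar) n \<in> Q1"
    by (simp_all add: mem_Times_iff)
  then obtain q0 q1 where
    q0: "q0 \<in> P0" "forces_W_in_Fplus P0 le0 D (fst \<circ> pbar) q0" and
    q1: "q1 \<in> P1" "forces_W_in_Fplus P1 le1 D (snd \<circ> pbar) q1"
    using L0 L1 unfolding F_linked_def by blast
  have "forces_W_in_Fplus (P0 \<times> P1) (prod_le le0 le1) D pbar (q0, q1)"
    unfolding forces_W_in_Fplus_iff Fplus_ultrafilter[OF D]
  proof (intro ballI impI)
    fix r assume "r \<in> P0 \<times> P1" "prod_le le0 le1 r (q0, q1)"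
    then have "{n. compat P0 le0 (fst r) (fst (pbar n))} \<in> D"
      and "{n. compat P1 le1 (snd r) (snd (pbar n))} \<in> D"
      using q0(2) q1(2) unfolding forces_W_in_Fplus_iff Fplus_ultrafilter[OF D] prod_le_def
      by auto
    then show "{n. compat (P0 \<times> P1) (prod_le le0 le1) r (pbar n)} \<in> D"
      using D unfolding compat_prod_le_iff ultrafilter_on_nat_def filter_on_nat_def
      by (simp add: Collect_conj_eq)
  qed
  then show "\<exists>q\<in>P0 \<times> P1. forces_W_in_Fplus (P0 \<times> P1) (prod_le le0 le1) D pbar q"
    using q0(1) q1(1) by blast
qed

lemma F_linked_subset: "F_linked P le F Q \<Longrightarrow> Y \<subseteq> Q \<Longrightarrow> F_linked P le F Y"
  unfolding F_linked_def by blast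

lemma F_linked_singleton:
  assumes "poset P le" "a \<in> P" "{} \<notin> F"
  shows "F_linked P le F {a}"
  unfolding F_linked_def
proof (intro conjI allI impI)
  show "{a} \<subseteq> P" using assms(2) by blast
  fix pbar :: "nat \<Rightarrow> 'a" assume "\<forall>n. pbar n \<in> {a}"
  then have "pbar = (\<lambda>_. a)" by auto
  moreover have "forces_W_in_Fplus P le F (\<lambda>_. a) a"
    unfolding forces_W_in_Fplus_def compat_def
  proof (intro ballI impI)
    fix r A assume "r \<in> P" "le r a" "A \<in> F"
    moreover have "le r r" using assms(1) \<open>r \<in> P\<close> unfolding poset_def by blast
    moreover have "A \<noteq> {}" using \<open>A \<in> F\<close> assms(3) by blast
    ultimately show "\<exists>n\<in>A. \<exists>s\<in>P. le s r \<and> le s a" by blast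
  qed
  ultimately show "\<exists>q\<in>P. forces_W_in_Fplus P le F pbar q" using assms(2) by blast
qed

lemma uf_linked_Times:
  "uf_linked P0 le0 Q0 \<Longrightarrow> uf_linked P1 le1 Q1
    \<Longrightarrow> uf_linked (P0 \<times> P1) (prod_le le0 le1) (Q0 \<times> Q1)"
  unfolding uf_linked_def
  by (simp add: F_linked_Times nonprincipal_ultrafilter_imp_ultrafilter)

lemma uf_linked_subset: "uf_linked P le Q \<Longrightarrow> Y \<subseteq> Q \<Longrightarrow> uf_linked P le Y"
  unfolding uf_linked_def using F_linked_subset by blast

lemma uf_linked_singleton: "poset P le \<Longrightarrow> a \<in> P \<Longrightarrow> uf_linked P le {a}"
  unfolding uf_linked_def nonprincipal_ultrafilter_def filter_on_nat_def
  by (simp add: F_linked_singleton)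

lemma Times_UN_reindex_infinite:
  assumes "infinite K"
  obtains Q where "\<forall>i\<in>K. \<exists>j\<in>K. \<exists>k\<in>K. Q i = Q0 j \<times> Q1 k"
    and "(\<Union>i\<in>K. Q0 i) \<times> (\<Union>i\<in>K. Q1 i) = (\<Union>i\<in>K. Q i)"
proof -
  have "|K| =o |K \<times> K|"
    using card_of_Times_same_infinite[OF assms] ordIso_symmetric by blast
  then obtain f where f: "bij_betw f K (K \<times> K)" using card_of_ordIso by blast
  define Q where "Q i = Q0 (fst (f i)) \<times> Q1 (snd (f i))" for i
  have "\<forall>i\<in>K. \<exists>j\<in>K. \<exists>k\<in>K. Q i = Q0 j \<times> Q1 k"
    using f unfolding Q_def bij_betw_def by fastforce
  moreover have "(\<Union>i\<in>K. Q i) = (\<Union>p\<in>f ` K. Q0 (fst p) \<times> Q1 (snd p))"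
    unfolding Q_def by simp
  then have "(\<Union>i\<in>K. Q0 i) \<times> (\<Union>i\<in>K. Q1 i) = (\<Union>i\<in>K. Q i)"
    using f unfolding bij_betw_def by auto
  ultimately show ?thesis using that by blast
qed

lemma mu_F_linked_Times:
  assumes "ultrafilter_on_nat D" "infinite K"
    and "mu_F_linked K P0 le0 D" "mu_F_linked K P1 le1 D"
  shows "mu_F_linked K (P0 \<times> P1) (prod_le le0 le1) D"
proof -
  obtain Q0 Q1 where Q0: "\<forall>i\<in>K. F_linked P0 le0 D (Q0 i)" "P0 = (\<Union>i\<in>K. Q0 i)"
    and Q1: "\<forall>i\<in>K. F_linked P1 le1 D (Q1 i)" "P1 = (\<Union>i\<in>K. Q1 i)"
    using assms(3,4) unfolding mu_F_linked_def by blast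
  obtain Q where "\<forall>i\<in>K. \<exists>j\<in>K. \<exists>k\<in>K. Q i = Q0 j \<times> Q1 k" "P0 \<times> P1 = (\<Union>i\<in>K. Q i)"
    using Times_UN_reindex_infinite[OF assms(2)] Q0(2) Q1(2) by metis
  then show ?thesis
    unfolding mu_F_linked_def using F_linked_Times[OF assms(1)] Q0(1) Q1(1) by metis
qed

lemma mu_uf_linked_Times:
  assumes "infinite K" "mu_uf_linked K P0 le0" "mu_uf_linked K P1 le1"
  shows "mu_uf_linked K (P0 \<times> P1) (prod_le le0 le1)"
proof -
  obtain Q0 Q1 where Q0: "\<forall>i\<in>K. uf_linked P0 le0 (Q0 i)" "P0 = (\<Union>i\<in>K. Q0 i)"
    and Q1: "\<forall>i\<in>K. uf_linked P1 le1 (Q1 i)" "P1 = (\<Union>i\<in>K. Q1 i)"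
    using assms(2,3) unfolding mu_uf_linked_def by blast
  obtain Q where "\<forall>i\<in>K. \<exists>j\<in>K. \<exists>k\<in>K. Q i = Q0 j \<times> Q1 k" "P0 \<times> P1 = (\<Union>i\<in>K. Q i)"
    using Times_UN_reindex_infinite[OF assms(1)] Q0(2) Q1(2) by metis
  then show ?thesis
    unfolding mu_uf_linked_def using uf_linked_Times Q0(1) Q1(1) by metis
qed

definition Knaster_wrt :: "'c rel \<Rightarrow> 'a set \<Rightarrow> ('a set \<Rightarrow> bool) \<Rightarrow> bool" where
  "Knaster_wrt \<theta> P L \<longleftrightarrow>
     (\<forall>X. X \<subseteq> P \<and> |X| =o \<theta> \<longrightarrow> (\<exists>Y. Y \<subseteq> X \<and> |Y| =o \<theta> \<and> L Y))"

lemma theta_F_Knaster_eq: "theta_F_Knaster \<theta> P le F = Knaster_wrt \<theta> P (F_linked P le F)"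
  unfolding theta_F_Knaster_def Knaster_wrt_def ..

lemma theta_uf_Knaster_eq: "theta_uf_Knaster \<theta> P le = Knaster_wrt \<theta> P (uf_linked P le)"
  unfolding theta_uf_Knaster_def Knaster_wrt_def ..

lemma card_of_subset_ordIso:
  assumes "Y \<subseteq> X" "|X| =o \<theta>" "\<theta> \<le>o |Y|"
  shows "|Y| =o \<theta>"
proof -
  have "|Y| \<le>o \<theta>" using card_of_mono1[OF assms(1)] assms(2) by (rule ordLeq_ordIso_trans)
  then show ?thesis using assms(3) by (simp add: ordIso_iff_ordLeq)
qed

lemma regularCard_image_or_fibre:
  assumes "Cinfinite \<theta>" "regularCard \<theta>" "|X| =o \<theta>"
  shows "|f ` X| =o \<theta> \<or> (\<exists>a\<in>f ` X. |X \<inter> f -` {a}| =o \<theta>)"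
proof (cases "|f ` X| =o \<theta>")
  case False
  moreover have "|f ` X| \<le>o \<theta>" using card_of_image assms(3) by (rule ordLeq_ordIso_trans)
  ultimately have "|f ` X| <o \<theta>" by (simp add: ordLeq_iff_ordLess_or_ordIso)
  have "\<exists>a\<in>f ` X. \<not> |X \<inter> f -` {a}| <o \<theta>"
  proof (rule ccontr)
    assume "\<not> ?thesis"
    then have "|\<Union>a\<in>f ` X. X \<inter> f -` {a}| <o \<theta>"
      by (intro card_of_UNION_ordLess_infinite_Field_regularCard[OF assms(2,1)
            \<open>|f ` X| <o \<theta>\<close>]) blast
    moreover have "(\<Union>a\<in>f ` X. X \<inter> f -` {a}) = X" by blast
    ultimately show False using assms(3) not_ordLess_ordIso by auto
  qed
  then obtain a where "a \<in> f ` X" "\<not> |X \<inter> f -` {a}| <o \<theta>" by blast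
  moreover have "Well_order \<theta>" using assms(1) card_order_on_well_order_on by blast
  ultimately have "\<theta> \<le>o |X \<inter> f -` {a}|"
    using not_ordLess_iff_ordLeq card_of_Well_order by blast
  then show ?thesis
    using card_of_subset_ordIso[OF _ assms(3)] \<open>a \<in> f ` X\<close> by blast
qed simp

text \<open>The singleton hypothesis handles the case where \<open>f\<close> is constant on a set of
  size \<open>\<theta>\<close>.\<close>

lemma Knaster_wrt_image:
  assumes "Cinfinite \<theta>" "regularCard \<theta>" "Knaster_wrt \<theta> P L" "\<forall>a\<in>P. L {a}"
    and X: "|X| =o \<theta>" "f ` X \<subseteq> P"
  shows "\<exists>X'. X' \<subseteq> X \<and> |X'| =o \<theta> \<and> L (f ` X')"
  using regularCard_image_or_fibre[OF assms(1,2) X(1)]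
proof
  assume "|f ` X| =o \<theta>"
  then obtain Z where Z: "Z \<subseteq> f ` X" "|Z| =o \<theta>" "L Z"
    using assms(3)[unfolded Knaster_wrt_def, rule_format, of "f ` X"] X(2) by blast
  have image: "f ` (X \<inter> f -` Z) = Z" using Z(1) by blast
  moreover have "|X \<inter> f -` Z| =o \<theta>"
  proof (rule card_of_subset_ordIso[OF _ X(1)])
    have "|Z| \<le>o |X \<inter> f -` Z|"
      using card_of_image[of f "X \<inter> f -` Z"] unfolding image .
    then show "\<theta> \<le>o |X \<inter> f -` Z|"
      by (rule ordIso_ordLeq_trans[OF ordIso_symmetric[OF Z(2)]])
  qed blast
  ultimately show ?thesis using Z(3) by (intro exI[of _ "X \<inter> f -` Z"]) simp
next
  assume "\<exists>a\<in>f ` X. |X \<inter> f -` {a}| =o \<theta>"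
  then obtain a where a: "a \<in> f ` X" "|X \<inter> f -` {a}| =o \<theta>" by blast
  then have "f ` (X \<inter> f -` {a}) = {a}" by blast
  moreover have "L {a}" using assms(4) X(2) a(1) by blast
  ultimately have "L (f ` (X \<inter> f -` {a}))" by simp
  then show ?thesis using a(2) by (intro exI[of _ "X \<inter> f -` {a}"]) blast
qed

lemma Knaster_wrt_Times:
  assumes "Cinfinite \<theta>" "regularCard \<theta>"
    and "Knaster_wrt \<theta> P L" "\<forall>a\<in>P. L {a}"
    and "Knaster_wrt \<theta> Q M" "\<forall>b\<in>Q. M {b}"
    and N: "\<And>A B Y. L A \<Longrightarrow> M B \<Longrightarrow> Y \<subseteq> A \<times> B \<Longrightarrow> N Y"
  shows "Knaster_wrt \<theta> (P \<times> Q) N"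
  unfolding Knaster_wrt_def
proof (intro allI impI)
  fix X assume "X \<subseteq> P \<times> Q \<and> |X| =o \<theta>"
  then have X: "X \<subseteq> P \<times> Q" "|X| =o \<theta>" by blast+
  then have fst_X: "fst ` X \<subseteq> P" by fastforce
  obtain X0 where X0: "X0 \<subseteq> X" "|X0| =o \<theta>" "L (fst ` X0)"
    using Knaster_wrt_image[OF assms(1-4) X(2) fst_X] by blast
  have snd_X0: "snd ` X0 \<subseteq> Q" using X(1) X0(1) by fastforce
  obtain X1 where X1: "X1 \<subseteq> X0" "|X1| =o \<theta>" "M (snd ` X1)"
    using Knaster_wrt_image[OF assms(1,2,5,6) X0(2) snd_X0] by blast
  have "X1 \<subseteq> fst ` X0 \<times> snd ` X1" using X1(1) by (auto intro: rev_image_eqI)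
  then have "N X1" by (rule N[OF X0(3) X1(3)])
  then show "\<exists>Y. Y \<subseteq> X \<and> |Y| =o \<theta> \<and> N Y" using X0(1) X1(1,2) by blast
qed

lemma theta_F_Knaster_Times:
  assumes D: "ultrafilter_on_nat D" and "poset P0 le0" "poset P1 le1"
    and "Cinfinite \<theta>" "regularCard \<theta>"
    and "theta_F_Knaster \<theta> P0 le0 D" "theta_F_Knaster \<theta> P1 le1 D"
  shows "theta_F_Knaster \<theta> (P0 \<times> P1) (prod_le le0 le1) D"
  unfolding theta_F_Knaster_eq
proof (rule Knaster_wrt_Times[where L = "F_linked P0 le0 D" and M = "F_linked P1 le1 D"])
  have "{} \<notin> D" using D unfolding ultrafilter_on_nat_def filter_on_nat_def by blast
  then show "\<forall>a\<in>P0. F_linked P0 le0 D {a}" "\<forall>b\<in>P1. F_linked P1 le1 D {b}"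
    using F_linked_singleton[OF assms(2)] F_linked_singleton[OF assms(3)] by blast+
  show "F_linked (P0 \<times> P1) (prod_le le0 le1) D Y"
    if "F_linked P0 le0 D A" "F_linked P1 le1 D B" "Y \<subseteq> A \<times> B" for A B Y
    using F_linked_subset[OF F_linked_Times[OF D that(1,2)] that(3)] .
qed (use assms(4-7) in \<open>simp_all only: theta_F_Knaster_eq\<close>)

lemma theta_uf_Knaster_Times:
  assumes "poset P0 le0" "poset P1 le1" "Cinfinite \<theta>" "regularCard \<theta>"
    and "theta_uf_Knaster \<theta> P0 le0" "theta_uf_Knaster \<theta> P1 le1"
  shows "theta_uf_Knaster \<theta> (P0 \<times> P1) (prod_le le0 le1)"
  unfolding theta_uf_Knaster_eq
proof (rule Knaster_wrt_Times[where L = "uf_linked P0 le0" and M = "uf_linked P1 le1"])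
  show "\<forall>a\<in>P0. uf_linked P0 le0 {a}" "\<forall>b\<in>P1. uf_linked P1 le1 {b}"
    using uf_linked_singleton[OF assms(1)] uf_linked_singleton[OF assms(2)] by blast+
  show "uf_linked (P0 \<times> P1) (prod_le le0 le1) Y"
    if "uf_linked P0 le0 A" "uf_linked P1 le1 B" "Y \<subseteq> A \<times> B" for A B Y
    using uf_linked_subset[OF uf_linked_Times[OF that(1,2)] that(3)] .
qed (use assms(3-6) in \<open>simp_all only: theta_uf_Knaster_eq\<close>)

theorem theorem3p19:
  fixes P0 :: "'a set" and le0 :: "'a \<Rightarrow> 'a \<Rightarrow> bool"
    and P1 :: "'b set" and le1 :: "'b \<Rightarrow> 'b \<Rightarrow> bool"
  assumes "poset P0 le0" and "poset P1 le1"
  shows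
    "(\<forall>D Q0 Q1. nonprincipal_ultrafilter D \<and> F_linked P0 le0 D Q0 \<and> F_linked P1 le1 D Q1
        \<longrightarrow> F_linked (P0 \<times> P1) (prod_le le0 le1) D (Q0 \<times> Q1))
     \<and> (\<forall>D (K :: 'k set). nonprincipal_ultrafilter D \<and> infinite K
          \<and> mu_F_linked K P0 le0 D \<and> mu_F_linked K P1 le1 D
        \<longrightarrow> mu_F_linked K (P0 \<times> P1) (prod_le le0 le1) D)
     \<and> (\<forall>D (\<theta> :: 'c rel). nonprincipal_ultrafilter D \<and> Cinfinite \<theta> \<and> regularCard \<theta>
          \<and> theta_F_Knaster \<theta> P0 le0 D \<and> theta_F_Knaster \<theta> P1 le1 D
        \<longrightarrow> theta_F_Knaster \<theta> (P0 \<times> P1) (prod_le le0 le1) D)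
     \<and> (\<forall>Q0 Q1. uf_linked P0 le0 Q0 \<and> uf_linked P1 le1 Q1
        \<longrightarrow> uf_linked (P0 \<times> P1) (prod_le le0 le1) (Q0 \<times> Q1))
     \<and> (\<forall>K :: 'k set. infinite K \<and> mu_uf_linked K P0 le0 \<and> mu_uf_linked K P1 le1
        \<longrightarrow> mu_uf_linked K (P0 \<times> P1) (prod_le le0 le1))
     \<and> (\<forall>\<theta> :: 'c rel. Cinfinite \<theta> \<and> regularCard \<theta>
          \<and> theta_uf_Knaster \<theta> P0 le0 \<and> theta_uf_Knaster \<theta> P1 le1
        \<longrightarrow> theta_uf_Knaster \<theta> (P0 \<times> P1) (prod_le le0 le1))"
  by (intro conjI allI impI)
    (simp_all add: assms nonprincipal_ultrafilter_imp_ultrafilter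
      F_linked_Times mu_F_linked_Times theta_F_Knaster_Times
      uf_linked_Times mu_uf_linked_Times theta_uf_Knaster_Times)

end
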